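(* Let $K\ge1$, $N=2^K-1$ and $\mu>0$. The $(N,K)$ binary simplex coded system with node service rate $\mu$ can serve arrival rates $(\lambda_1,\dots,\lambda_K)\in\mathbb{R}_{\ge0}^K$ if and only if $\lambda_1+\dots+\lambda_K\le 2^{K-1}\mu$. That is, its service capacity region is the simplex $\{(\lambda_1,\dots,\lambda_K)\in\mathbb{R}_{\ge0}^K:\sum_i\lambda_i\le 2^{K-1}\mu\}$.
   Context: Binary simplex coded system: $K$ files $f_1,\dots,f_K$ of equal size (elements of a vector space over a field of characteristic $2$) are stored on $N=2^K-1$ nodes indexed by the nonzero vectors $v\in\mathbb{F}_2^K$, node $v$ storing $\sum_{j=1}^K v_jf_j$. Each node has service rate $\mu$. Let $e_i$ be the $i$-th standard basis vector. The recovering sets of file $f_i$ are the systematic node $\{e_i\}$ and the $2^{K-1}-1$ disjoint repair groups $\{v,v+e_i\}$, $v\in\mathbb{F}_2^K\setminus\{0,e_i\}$ (each unordered pair counted once). Requests for $f_i$ arrive at rate $\lambda_i\ge0$. The system can serve $(\lambda_1,\dots,\lambda_K)$ (i.e., the vector lies in the service capacity region) if there exist nonnegative rates assigned to the recovering sets of each $f_i$, summing to $\lambda_i$ for every $i$, such that for every node the total rate assigned to recovering sets containing that node is at most $\mu$. *)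

theory Defs
  imports Complex_Main
begin

text \<open>A vector v in F_2^K (coordinates indexed by 0..K-1) is identified with its
support, a subset of {..<K}; vector addition is symmetric difference and the
standard basis vector e_i is {i}.\<close>

definition vadd :: "nat set \<Rightarrow> nat set \<Rightarrow> nat set" where
  "vadd u v = (u - v) \<union> (v - u)"

definition basis_vec :: "nat \<Rightarrow> nat set" where
  "basis_vec i = {i}"

text \<open>Nodes of the (2^K-1, K) binary simplex code: the nonzero vectors of F_2^K.\<close>
definition simplex_nodes :: "nat \<Rightarrow> nat set set" where
  "simplex_nodes K = {v. v \<subseteq> {..<K} \<and> v \<noteq> {}}"

text \<open>Recovering sets of file i: the systematic node {e_i} and the repair groups
{v, v + e_i} for v nonzero, v \<noteq> e_i (unordered pairs, each counted once
since they are sets).\<close>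
definition recovering_sets :: "nat \<Rightarrow> nat \<Rightarrow> nat set set set" where
  "recovering_sets K i =
     {{basis_vec i}} \<union>
     {{v, vadd v (basis_vec i)} | v. v \<in> simplex_nodes K \<and> v \<noteq> basis_vec i}"

definition can_serve :: "nat \<Rightarrow> real \<Rightarrow> (nat \<Rightarrow> real) \<Rightarrow> bool" where
  "can_serve K mu lam \<longleftrightarrow>
     (\<exists>r :: nat \<Rightarrow> nat set set \<Rightarrow> real.
        (\<forall>i<K. \<forall>R\<in>recovering_sets K i. r i R \<ge> 0) \<and>
        (\<forall>i<K. (\<Sum>R\<in>recovering_sets K i. r i R) = lam i) \<and>
        (\<forall>v\<in>simplex_nodes K.
           (\<Sum>i<K. \<Sum>R\<in>{R\<in>recovering_sets K i. v \<in> R}. r i R) \<le> mu))"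

end

theory Submission
  imports Defs
begin

text \<open>Writing w for the part of a node outside coordinate i, the recovering sets of file i
are indexed by the 2^(K-1) subsets w of the other coordinates, and every node lies in
exactly one of them. Hence spreading each rate lam i uniformly over its recovering sets
loads every node with (\<Sum>i. lam i) / 2^(K-1), which gives sufficiency. Conversely,
every recovering set contains a node of odd weight ({e_i}, or one of w and w + e_i),
so summing the loads of the 2^(K-1) odd-weight nodes counts every request at least
once, which gives necessity.\<close>

definition repair_group :: "nat \<Rightarrow> nat set \<Rightarrow> nat set set" where
  "repair_group i w = (if w = {} then {{i}} else {w, insert i w})"

lemma mem_repair_group_iff:
  assumes "i \<notin> w" and "v \<noteq> {}"
  shows "v \<in> repair_group i w \<longleftrightarrow> w = v - {i}"
  using assms by (auto simp: repair_group_def)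

lemma insert_mem_repair_group: "insert i w \<in> repair_group i w"
  by (simp add: repair_group_def)

lemma inj_on_repair_group: "inj_on (repair_group i) {w. i \<notin> w}"
proof (rule inj_onI)
  fix v w assume "v \<in> {w. i \<notin> w}" and "w \<in> {w. i \<notin> w}"
    and eq: "repair_group i v = repair_group i w"
  then have "v = insert i v - {i}" and "w = insert i v - {i}"
    using insert_mem_repair_group[of i v] mem_repair_group_iff[of i _ "insert i v"] by auto
  then show "v = w" by simp
qed

lemma recovering_sets_eq_image:
  assumes "i < K"
  shows "recovering_sets K i = repair_group i ` Pow ({..<K} - {i})"
proof (intro equalityI subsetI)
  fix R assume "R \<in> recovering_sets K i"
  then consider "R = {{i}}"
    | v where "R = {v, vadd v {i}}" "v \<subseteq> {..<K}" "v \<noteq> {}" "v \<noteq> {i}"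
    unfolding recovering_sets_def basis_vec_def simplex_nodes_def by blast
  then show "R \<in> repair_group i ` Pow ({..<K} - {i})"
  proof cases
    case 1
    then show ?thesis
      by (intro image_eqI[of _ _ "{}"]) (auto simp: repair_group_def)
  next
    case 2
    then have "R = repair_group i (v - {i})" and "v - {i} \<noteq> {}"
      by (auto simp: repair_group_def vadd_def)
    then show ?thesis using 2 by blast
  qed
next
  fix R assume "R \<in> repair_group i ` Pow ({..<K} - {i})"
  then obtain w where w: "w \<subseteq> {..<K} - {i}" "R = repair_group i w" by auto
  show "R \<in> recovering_sets K i"
  proof (cases "w = {}")
    case True
    then show ?thesis
      using w by (simp add: repair_group_def recovering_sets_def basis_vec_def)
  next
    case False
    have "R = {w, vadd w (basis_vec i)}"
      using w False by (auto simp: repair_group_def vadd_def basis_vec_def)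
    moreover have "w \<in> simplex_nodes K" "w \<noteq> basis_vec i"
      using w False by (auto simp: simplex_nodes_def basis_vec_def)
    ultimately show ?thesis
      unfolding recovering_sets_def by blast
  qed
qed

lemma finite_recovering_sets: "i < K \<Longrightarrow> finite (recovering_sets K i)"
  by (simp add: recovering_sets_eq_image)

lemma card_recovering_sets:
  assumes "i < K"
  shows "card (recovering_sets K i) = 2 ^ (K - 1)"
proof -
  have "inj_on (repair_group i) (Pow ({..<K} - {i}))"
    by (rule inj_on_subset[OF inj_on_repair_group]) blast
  then have "card (recovering_sets K i) = card (Pow ({..<K} - {i}))"
    unfolding recovering_sets_eq_image[OF assms] by (rule card_image)
  also have "\<dots> = 2 ^ (K - 1)"
    using assms by (simp add: card_Pow)
  finally show ?thesis .
qed

lemma recovering_sets_containing_node: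
  assumes "i < K" and "v \<in> simplex_nodes K"
  shows "{R \<in> recovering_sets K i. v \<in> R} = {repair_group i (v - {i})}"
proof -
  have "v \<subseteq> {..<K}" and "v \<noteq> {}"
    using assms(2) by (simp_all add: simplex_nodes_def)
  then have "v - {i} \<in> Pow ({..<K} - {i})" by blast
  have "R = repair_group i (v - {i})"
    if rec: "R \<in> recovering_sets K i" and "v \<in> R" for R
  proof -
    obtain w where w: "w \<in> Pow ({..<K} - {i})" and R: "R = repair_group i w"
      using rec unfolding recovering_sets_eq_image[OF assms(1)] by (rule imageE)
    have "i \<notin> w" using w by blast
    then have "w = v - {i}"
      using mem_repair_group_iff \<open>v \<noteq> {}\<close> \<open>v \<in> R\<close> R by simp
    then show ?thesis using R by simp
  qed
  moreover have "repair_group i (v - {i}) \<in> recovering_sets K i"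
    unfolding recovering_sets_eq_image[OF assms(1)] using \<open>v - {i} \<in> Pow ({..<K} - {i})\<close>
    by (rule imageI)
  moreover have "v \<in> repair_group i (v - {i})"
    using mem_repair_group_iff[of i "v - {i}" v] \<open>v \<noteq> {}\<close> by simp
  ultimately show ?thesis by blast
qed

lemma odd_node_in_repair_group:
  assumes "finite w" and "i \<notin> w"
  shows "\<exists>v\<in>repair_group i w. v \<subseteq> insert i w \<and> odd (card v)"
proof (cases "w = {}")
  case True
  then show ?thesis by (simp add: repair_group_def)
next
  case False
  have "odd (card w) \<or> odd (card (insert i w))"
    using assms by simp
  then show ?thesis
    using False by (auto simp: repair_group_def)
qed

lemma odd_node_in_recovering_set:
  assumes "i < K" and "R \<in> recovering_sets K i"
  shows "R \<inter> {v. v \<subseteq> {..<K} \<and> odd (card v)} \<noteq> {}"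
proof -
  obtain w where w: "w \<in> Pow ({..<K} - {i})" and R: "R = repair_group i w"
    using assms(2) unfolding recovering_sets_eq_image[OF assms(1)] by (rule imageE)
  then have "w \<subseteq> {..<K}" and "i \<notin> w" by auto
  have "finite w"
    using \<open>w \<subseteq> {..<K}\<close> finite_lessThan by (rule finite_subset)
  then obtain v where "v \<in> R" "v \<subseteq> insert i w" "odd (card v)"
    using odd_node_in_repair_group[of w i] \<open>i \<notin> w\<close> R by blast
  moreover have "insert i w \<subseteq> {..<K}"
    using \<open>w \<subseteq> {..<K}\<close> assms(1) by simp
  ultimately show ?thesis by blast
qed

lemma card_odd_subsets:
  assumes "finite S" and "S \<noteq> {}"
  shows "card {T. T \<subseteq> S \<and> odd (card T)} = 2 ^ (card S - 1)"
proof -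
  let ?odd = "{T. T \<subseteq> S \<and> odd (card T)}" and ?even = "{T. T \<subseteq> S \<and> even (card T)}"
  have "card ?even = card ?odd"
    using card_subsupersets_even_odd[of S "{}"] assms by auto
  moreover have "card ?odd + card ?even = card (Pow S)"
    using assms(1) by (subst card_Un_disjoint[symmetric]) (auto intro: arg_cong[where f = card])
  moreover have "card S = Suc (card S - 1)"
    using assms by (simp add: card_gt_0_iff)
  then have "card (Pow S) = 2 * 2 ^ (card S - 1)"
    using assms(1) by (metis card_Pow power_Suc)
  ultimately show ?thesis by simp
qed

lemma sum_le_sum_over_hitting_set:
  fixes r :: "'a set \<Rightarrow> 'b::{semiring_1, ordered_comm_monoid_add}"
  assumes "finite F" and "finite H"
    and nonneg: "\<And>R. R \<in> F \<Longrightarrow> 0 \<le> r R"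
    and hits: "\<And>R. R \<in> F \<Longrightarrow> R \<inter> H \<noteq> {}"
  shows "sum r F \<le> (\<Sum>v\<in>H. \<Sum>R\<in>{R\<in>F. v \<in> R}. r R)"
proof -
  have "r R \<le> (\<Sum>v\<in>H. if v \<in> R then r R else 0)" if R: "R \<in> F" for R
  proof -
    obtain v where "v \<in> R" "v \<in> H" using hits[OF R] by blast
    then show ?thesis
      using member_le_sum[of v H "\<lambda>v. if v \<in> R then r R else 0"] nonneg[OF R] \<open>finite H\<close>
      by simp
  qed
  then have "sum r F \<le> (\<Sum>R\<in>F. \<Sum>v\<in>H. if v \<in> R then r R else 0)"
    by (rule sum_mono)
  also have "\<dots> = (\<Sum>v\<in>H. \<Sum>R\<in>F. if v \<in> R then r R else 0)"
    by (rule sum.swap)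
  also have "\<dots> = (\<Sum>v\<in>H. \<Sum>R\<in>{R\<in>F. v \<in> R}. r R)"
    using \<open>finite F\<close> by (simp add: sum.inter_filter)
  finally show ?thesis .
qed

lemma can_serve_imp_sum_le:
  assumes "K \<ge> 1" and "can_serve K mu lam"
  shows "(\<Sum>i<K. lam i) \<le> 2 ^ (K - 1) * mu"
proof -
  define H where "H = {v. v \<subseteq> {..<K} \<and> odd (card v)}"
  obtain r where nonneg: "\<forall>i<K. \<forall>R\<in>recovering_sets K i. r i R \<ge> 0"
    and total: "\<forall>i<K. (\<Sum>R\<in>recovering_sets K i. r i R) = lam i"
    and load: "\<forall>v\<in>simplex_nodes K. (\<Sum>i<K. \<Sum>R\<in>{R\<in>recovering_sets K i. v \<in> R}. r i R) \<le> mu"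
    using assms(2) unfolding can_serve_def by blast
  have "finite H" by (simp add: H_def)
  have "H \<subseteq> simplex_nodes K" by (auto simp: H_def simplex_nodes_def)
  have "(\<Sum>i<K. lam i) = (\<Sum>i<K. \<Sum>R\<in>recovering_sets K i. r i R)"
    using total by simp
  also have "\<dots> \<le> (\<Sum>i<K. \<Sum>v\<in>H. \<Sum>R\<in>{R\<in>recovering_sets K i. v \<in> R}. r i R)"
    using nonneg odd_node_in_recovering_set \<open>finite H\<close>
    by (intro sum_mono sum_le_sum_over_hitting_set) (auto simp: finite_recovering_sets H_def)
  also have "\<dots> = (\<Sum>v\<in>H. \<Sum>i<K. \<Sum>R\<in>{R\<in>recovering_sets K i. v \<in> R}. r i R)"
    by (rule sum.swap)
  also have "\<dots> \<le> (\<Sum>v\<in>H. mu)"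
    using load \<open>H \<subseteq> simplex_nodes K\<close> by (intro sum_mono) blast
  also have "\<dots> = 2 ^ (K - 1) * mu"
  proof -
    have "{..<K} \<noteq> {}" using assms(1) by (simp add: lessThan_empty_iff)
    then have "card H = 2 ^ (K - 1)"
      unfolding H_def using card_odd_subsets[of "{..<K}"] by simp
    then show ?thesis by simp
  qed
  finally show ?thesis .
qed

lemma sum_le_imp_can_serve:
  assumes "\<forall>i<K. lam i \<ge> 0" and "(\<Sum>i<K. lam i) \<le> 2 ^ (K - 1) * mu"
  shows "can_serve K mu lam"
  unfolding can_serve_def
proof (intro exI[of _ "\<lambda>i R. lam i / 2 ^ (K - 1)"] conjI allI impI ballI)
  fix i R assume "i < K"
  then show "0 \<le> lam i / 2 ^ (K - 1)" using assms(1) by simp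
next
  fix i assume "i < K"
  then show "(\<Sum>R\<in>recovering_sets K i. lam i / 2 ^ (K - 1)) = lam i"
    by (simp add: card_recovering_sets)
next
  fix v assume "v \<in> simplex_nodes K"
  then have "(\<Sum>i<K. \<Sum>R\<in>{R\<in>recovering_sets K i. v \<in> R}. lam i / 2 ^ (K - 1))
      = (\<Sum>i<K. lam i / 2 ^ (K - 1))"
    by (intro sum.cong refl) (simp add: recovering_sets_containing_node)
  also have "\<dots> = (\<Sum>i<K. lam i) / 2 ^ (K - 1)"
    by (rule sum_divide_distrib[symmetric])
  also have "\<dots> \<le> mu"
    using assms(2) by (simp add: divide_le_eq mult.commute)
  finally show "(\<Sum>i<K. \<Sum>R\<in>{R\<in>recovering_sets K i. v \<in> R}. lam i / 2 ^ (K - 1)) \<le> mu" .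
qed

theorem theorem3:
  fixes K :: nat and mu :: real and lam :: "nat \<Rightarrow> real"
  assumes "K \<ge> 1" and "mu > 0" and "\<forall>i<K. lam i \<ge> 0"
  shows "can_serve K mu lam \<longleftrightarrow> (\<Sum>i<K. lam i) \<le> 2 ^ (K - 1) * mu"
  using can_serve_imp_sum_le[OF assms(1)] sum_le_imp_can_serve[OF assms(3)] by blast

end
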